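(* Let $G$ be a group acting geometrically (i.e.\ properly and cocompactly by isometries) on a CAT(0) space $X$. For every $g\in G$, $$\mathcal{F}_g = L(Z_g),$$ where $\mathcal{F}_g=\{\alpha\in\partial X \mid g\alpha=\alpha\}$ is the fixed-point set of $g$ in the boundary $\partial X$, $Z_g=\{v\in G\mid gv=vg\}$ is the centralizer of $g$, and $L(Z_g)$ is the limit set of $Z_g$ in $\partial X$.
   Context: A CAT(0) space admitting a geometric group action is proper. For a proper CAT(0) space $X$, $\partial X$ denotes its visual boundary: the set of asymptotic classes of geodesic rays (two rays $\xi,\zeta$ are asymptotic if $\sup_{t\ge0}d(\xi(t),\zeta(t))<\infty$), with the cone topology, which makes $X\cup\partial X$ a compact metrizable space containing $X$ as an open dense subspace. An isometry $g$ of $X$ acts on $\partial X$ by $g(\xi(\infty))=(g\circ\xi)(\infty)$. For a subset $A\subset G$, the limit set is $L(A)=\overline{Ax_0}\cap\partial X$, where $x_0\in X$ and the closure of the orbit $Ax_0$ is taken in $X\cup\partial X$; this does not depend on the choice of $x_0$. *)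

theory Defs
  imports "HOL-Analysis.Analysis" "HOL-Algebra.Group_Action"
begin

definition geodesic_segment :: "(real \<Rightarrow> 'a::metric_space) \<Rightarrow> 'a \<Rightarrow> 'a \<Rightarrow> bool" where
  "geodesic_segment c x y \<longleftrightarrow> c 0 = x \<and> c (dist x y) = y \<and>
     (\<forall>s\<in>{0..dist x y}. \<forall>t\<in>{0..dist x y}. dist (c s) (c t) = \<bar>s - t\<bar>)"

definition eucl_seg :: "complex \<Rightarrow> complex \<Rightarrow> real \<Rightarrow> complex" where
  "eucl_seg a b s = a + complex_of_real (s / cmod (b - a)) * (b - a)"

text \<open>Pairs (point on the geodesic triangle, corresponding point on the comparison triangle).\<close>
definition comparison_pairs ::
  "'a::metric_space \<Rightarrow> 'a \<Rightarrow> 'a \<Rightarrow> (real \<Rightarrow> 'a) \<Rightarrow> (real \<Rightarrow> 'a) \<Rightarrow> (real \<Rightarrow> 'a)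
     \<Rightarrow> complex \<Rightarrow> complex \<Rightarrow> complex \<Rightarrow> ('a \<times> complex) set" where
  "comparison_pairs x y z c1 c2 c3 a b e =
     {(c1 s, eucl_seg a b s) | s. s \<in> {0..dist x y}} \<union>
     {(c2 s, eucl_seg b e s) | s. s \<in> {0..dist y z}} \<union>
     {(c3 s, eucl_seg e a s) | s. s \<in> {0..dist z x}}"

definition CAT0 :: "'a::metric_space itself \<Rightarrow> bool" where
  "CAT0 _ \<longleftrightarrow>
     (\<forall>x y::'a. \<exists>c. geodesic_segment c x y) \<and>
     (\<forall>(x::'a) y z c1 c2 c3 a b e.
        geodesic_segment c1 x y \<and> geodesic_segment c2 y z \<and> geodesic_segment c3 z x \<and>
        dist a b = dist x y \<and> dist b e = dist y z \<and> dist e a = dist z x \<longrightarrow>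
        (\<forall>(p, p')\<in>comparison_pairs x y z c1 c2 c3 a b e.
           \<forall>(q, q')\<in>comparison_pairs x y z c1 c2 c3 a b e. dist p q \<le> dist p' q'))"

definition geodesic_ray :: "(real \<Rightarrow> 'a::metric_space) \<Rightarrow> bool" where
  "geodesic_ray c \<longleftrightarrow> (\<forall>s\<ge>0. \<forall>t\<ge>0. dist (c s) (c t) = \<bar>s - t\<bar>)"

definition asymptotic :: "(real \<Rightarrow> 'a::metric_space) \<Rightarrow> (real \<Rightarrow> 'a) \<Rightarrow> bool" where
  "asymptotic c c' \<longleftrightarrow> (\<exists>B. \<forall>t\<ge>0. dist (c t) (c' t) \<le> B)"

text \<open>Boundary points are asymptotic classes of geodesic rays.\<close>
definition ray_class :: "(real \<Rightarrow> 'a::metric_space) \<Rightarrow> (real \<Rightarrow> 'a) set" where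
  "ray_class c = {c'. geodesic_ray c' \<and> asymptotic c c'}"

definition visual_boundary :: "'a::metric_space itself \<Rightarrow> (real \<Rightarrow> 'a) set set" where
  "visual_boundary _ = {ray_class c | c. geodesic_ray c}"

definition boundary_map :: "('a::metric_space \<Rightarrow> 'a) \<Rightarrow> (real \<Rightarrow> 'a) set \<Rightarrow> (real \<Rightarrow> 'a) set" where
  "boundary_map h \<alpha> = ray_class (h \<circ> (SOME c. c \<in> \<alpha>))"

definition boundary_fixed_points :: "('a::metric_space \<Rightarrow> 'a) \<Rightarrow> (real \<Rightarrow> 'a) set set" where
  "boundary_fixed_points h = {\<alpha> \<in> visual_boundary TYPE('a). boundary_map h \<alpha> = \<alpha>}"

text \<open>Cone topology: \<alpha> lies in the closure (in X \<union> \<partial>X) of S \<subseteq> X iff every basic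
  neighbourhood U(c,r,\<epsilon>) = {x. d(x0,x) > r, d(c_x(r), c(r)) < \<epsilon>} of \<alpha> meets S, where c is
  the ray in \<alpha> issuing from the base point x0 and c_x the geodesic from x0 to x.\<close>
definition in_cone_closure :: "'a::metric_space \<Rightarrow> 'a set \<Rightarrow> (real \<Rightarrow> 'a) set \<Rightarrow> bool" where
  "in_cone_closure x0 S \<alpha> \<longleftrightarrow>
     (\<exists>c\<in>\<alpha>. c 0 = x0 \<and>
        (\<forall>r>0. \<forall>\<epsilon>>0. \<exists>x\<in>S. dist x0 x > r \<and>
           (\<exists>cx. geodesic_segment cx x0 x \<and> dist (cx r) (c r) < \<epsilon>)))"

text \<open>Limit set L(A) = closure of A x0 in X \<union> \<partial>X, intersected with \<partial>X.\<close>
definition limit_set :: "('g \<Rightarrow> 'a::metric_space \<Rightarrow> 'a) \<Rightarrow> 'a \<Rightarrow> 'g set \<Rightarrow> (real \<Rightarrow> 'a) set set" where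
  "limit_set \<phi> x0 A =
     {\<alpha> \<in> visual_boundary TYPE('a). in_cone_closure x0 ((\<lambda>v. \<phi> v x0) ` A) \<alpha>}"

text \<open>Proper action in the sense of Bridson--Haefliger I.8.2 and cocompactness.\<close>
definition geometric_action :: "('g, 'b) monoid_scheme \<Rightarrow> ('g \<Rightarrow> 'a::metric_space \<Rightarrow> 'a) \<Rightarrow> bool" where
  "geometric_action G \<phi> \<longleftrightarrow>
     group_action G (UNIV :: 'a set) \<phi> \<and>
     (\<forall>v\<in>carrier G. \<forall>x y. dist (\<phi> v x) (\<phi> v y) = dist x y) \<and>
     (\<forall>x. \<exists>r>0. finite {v \<in> carrier G. \<phi> v ` ball x r \<inter> ball x r \<noteq> {}}) \<and>
     (\<exists>K. compact K \<and> (\<Union>v\<in>carrier G. \<phi> v ` K) = UNIV)"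

definition centralizer_of :: "('g, 'b) monoid_scheme \<Rightarrow> 'g \<Rightarrow> 'g set" where
  "centralizer_of G g = {v \<in> carrier G. g \<otimes>\<^bsub>G\<^esub> v = v \<otimes>\<^bsub>G\<^esub> g}"

end

theory Submission
  imports Defs
begin

text \<open>
  For an isometry \<open>h\<close> and a ray \<open>c\<close>, the boundary point \<open>c(\<infinity>)\<close> is fixed by \<open>h\<close> iff the
  displacement \<open>d(c t, h (c t))\<close> stays bounded. In a CAT(0) space this displacement is convex in
  \<open>t\<close>, so along a ray from \<open>x0\<close> whose endpoint is fixed by \<open>g\<close> it is at most \<open>D = d(x0, g x0)\<close>.
  Every point moved at most \<open>D\<close> by \<open>g\<close> lies within bounded distance of the orbit \<open>Z\<^sub>g x0\<close>:
  writing it as \<open>h k\<close> with \<open>k\<close> in a compact set \<open>K\<close> whose translates cover \<open>X\<close>, the conjugate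
  \<open>h\<^sup>-\<^sup>1 g h\<close> is one of the finitely many elements moving a point of \<open>K\<close> by at most \<open>D\<close>
  (properness), and two conjugators of the same conjugate differ by an element of \<open>Z\<^sub>g\<close>. Hence
  the ray stays near \<open>Z\<^sub>g x0\<close> and its endpoint lies in \<open>L(Z\<^sub>g)\<close>. Conversely, \<open>g\<close> commutes
  with every \<open>u \<in> Z\<^sub>g\<close>, so it moves both endpoints of a geodesic from \<open>x0\<close> to \<open>u x0\<close> by \<open>D\<close>
  and, by convexity, all of its points by at most \<open>D\<close>; a ray approximated by such geodesics is
  therefore moved boundedly by \<open>g\<close>. Rays from \<open>x0\<close> exist in every boundary class because \<open>X\<close>
  is complete, which also follows from the geometric action.
\<close>

section \<open>Comparison triangles and convexity of the metric\<close>

lemma plane_triangle_exists: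
  fixes a b c :: real
  assumes "0 \<le> a" "0 \<le> b" "0 \<le> c" "a \<le> b + c" "b \<le> a + c" "c \<le> a + b"
  shows "\<exists>x y. x\<^sup>2 + y\<^sup>2 = b\<^sup>2 \<and> (x - a)\<^sup>2 + y\<^sup>2 = c\<^sup>2"
proof (cases "a = 0")
  case True
  then have "b = c" using assms by auto
  then show ?thesis using True by (intro exI[of _ b] exI[of _ 0]) auto
next
  case False
  then have a0: "a > 0" using assms by auto
  define x where "x = (a\<^sup>2 + b\<^sup>2 - c\<^sup>2) / (2 * a)"
  have ax: "2 * a * x = a\<^sup>2 + b\<^sup>2 - c\<^sup>2" using a0 by (simp add: x_def)
  have "c\<^sup>2 \<le> (a + b)\<^sup>2" using assms by (simp add: power_mono)
  moreover have "(a - b)\<^sup>2 \<le> c\<^sup>2"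
    using abs_le_square_iff[of "a - b" c] assms by auto
  ultimately have "\<bar>2 * a * x\<bar> \<le> 2 * a * b"
    unfolding ax by (auto simp: power2_eq_square algebra_simps abs_if)
  then have "\<bar>x\<bar> \<le> b" using a0 by (simp add: abs_mult)
  then have xb: "x\<^sup>2 \<le> b\<^sup>2" by (metis abs_le_square_iff abs_of_nonneg assms(2))
  define y where "y = sqrt (b\<^sup>2 - x\<^sup>2)"
  have y2: "y\<^sup>2 = b\<^sup>2 - x\<^sup>2" using xb by (simp add: y_def)
  have "(x - a)\<^sup>2 + y\<^sup>2 = c\<^sup>2" using y2 ax by (simp add: power2_eq_square algebra_simps)
  then show ?thesis using y2 by (intro exI[of _ x] exI[of _ y]) auto
qed

lemma comparison_triangle_exists:
  fixes p q r :: "'a::metric_space"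
  obtains E :: complex where "cmod E = dist p r" "cmod (of_real (dist p q) - E) = dist q r"
proof -
  have "dist p q \<le> dist p r + dist q r" "dist p r \<le> dist p q + dist q r"
    "dist q r \<le> dist p q + dist p r"
    by (metis dist_commute dist_triangle)+
  then obtain x y where xy: "x\<^sup>2 + y\<^sup>2 = (dist p r)\<^sup>2" "(x - dist p q)\<^sup>2 + y\<^sup>2 = (dist q r)\<^sup>2"
    using plane_triangle_exists[of "dist p q" "dist p r" "dist q r"] by auto
  have "of_real (dist p q) - Complex x y = Complex (dist p q - x) (- y)"
    by (simp add: complex_eq_iff)
  then show ?thesis
    using xy by (intro that[of "Complex x y"]) (simp_all add: cmod_def power2_commute)
qed

lemma geodesic_segment_dist:
  assumes "geodesic_segment c x y" "s \<in> {0..dist x y}" "t \<in> {0..dist x y}"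
  shows "dist (c s) (c t) = \<bar>s - t\<bar>"
  using assms unfolding geodesic_segment_def by auto

lemma geodesic_segment_reverse:
  assumes "geodesic_segment c x y"
  shows "geodesic_segment (\<lambda>s. c (dist x y - s)) y x"
  using assms unfolding geodesic_segment_def by (auto simp: dist_commute abs_minus_commute)

lemma geodesic_segment_isometry:
  assumes "\<And>x y. dist (h x) (h y) = dist x y" "geodesic_segment c x y"
  shows "geodesic_segment (h \<circ> c) (h x) (h y)"
  using assms unfolding geodesic_segment_def by simp

lemma geodesic_segment_subdivision_dist:
  assumes "geodesic_segment \<gamma> x y" "j < N"
  shows "dist (\<gamma> (real j * dist x y / real N)) (\<gamma> (real (Suc j) * dist x y / real N))
    = dist x y / real N"
proof -
  have "real j * dist x y \<le> real N * dist x y" "real (Suc j) * dist x y \<le> real N * dist x y"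
    using assms(2) by (simp_all add: mult_right_mono)
  then have "real j * dist x y / real N \<in> {0..dist x y}"
    "real (Suc j) * dist x y / real N \<in> {0..dist x y}"
    using assms(2) by (auto simp: divide_le_eq mult.commute)
  then show ?thesis
    using geodesic_segment_dist[OF assms(1)] assms(2) by (simp add: field_simps)
qed

lemma CAT0_geodesic_exists:
  assumes "CAT0 TYPE('a::metric_space)"
  obtains c where "geodesic_segment c (x::'a) y"
  using assms unfolding CAT0_def by blast

lemma CAT0_comparison:
  fixes p q r :: "'a::metric_space"
  assumes cat: "CAT0 TYPE('a)"
    and g1: "geodesic_segment c1 p q" and g3: "geodesic_segment c3 p r"
    and s1: "s1 \<in> {0..dist p q}" and s2: "s2 \<in> {0..dist p r}"
    and B: "cmod B = dist p q" and E: "cmod E = dist p r" and BE: "cmod (B - E) = dist q r"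
  shows "dist (c1 s1) (c3 s2)
    \<le> cmod (of_real (s1 / dist p q) * B - of_real (s2 / dist p r) * E)"
proof -
  obtain c2 where g2: "geodesic_segment c2 q r" using CAT0_geodesic_exists[OF cat] .
  define c3' where "c3' = (\<lambda>s. c3 (dist p r - s))"
  have g3': "geodesic_segment c3' r p"
    unfolding c3'_def by (rule geodesic_segment_reverse[OF g3])
  let ?P = "comparison_pairs p q r c1 c2 c3' 0 B E"
  have cmp: "\<forall>(x, x')\<in>?P. \<forall>(y, y')\<in>?P. dist x y \<le> dist x' y'"
    using cat g1 g2 g3' B E BE unfolding CAT0_def
    by (auto simp: dist_commute dist_complex_def norm_minus_commute)
  have m1: "(c1 s1, eucl_seg 0 B s1) \<in> ?P"
    using s1 unfolding comparison_pairs_def by blast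
  have "dist r p - s2 \<in> {0..dist r p}" using s2 by (auto simp: dist_commute)
  then have m3: "(c3' (dist r p - s2), eucl_seg E 0 (dist r p - s2)) \<in> ?P"
    unfolding comparison_pairs_def by blast
  have e1: "c3' (dist r p - s2) = c3 s2" by (simp add: c3'_def dist_commute)
  have e2: "eucl_seg 0 B s1 = of_real (s1 / dist p q) * B"
    by (simp add: eucl_seg_def B)
  have e3: "eucl_seg E 0 (dist r p - s2) = of_real (s2 / dist p r) * E"
  proof (cases "dist p r = 0")
    case True
    then show ?thesis using E by (simp add: eucl_seg_def)
  next
    case False
    then show ?thesis using E by (simp add: eucl_seg_def dist_commute field_simps)
  qed
  have "dist (c1 s1) (c3' (dist r p - s2)) \<le> dist (eucl_seg 0 B s1) (eucl_seg E 0 (dist r p - s2))"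
    using cmp m1 m3 by fast
  then show ?thesis using e1 e2 e3 by (simp add: dist_complex_def)
qed

lemma CAT0_dist_scaled_le:
  fixes p q r :: "'a::metric_space"
  assumes cat: "CAT0 TYPE('a)"
    and g1: "geodesic_segment c1 p q" and g3: "geodesic_segment c3 p r"
    and t: "0 \<le> t" "t \<le> 1"
  shows "dist (c1 (t * dist p q)) (c3 (t * dist p r)) \<le> t * dist q r"
proof -
  obtain E where E: "cmod E = dist p r" "cmod (of_real (dist p q) - E) = dist q r"
    using comparison_triangle_exists .
  have scale: "of_real (t * dist p q / dist p q) * of_real (dist p q) = of_real t * of_real (dist p q)"
    "of_real (t * dist p r / dist p r) * E = of_real t * E"
    using E(1) by (cases "dist p q = 0"; cases "dist p r = 0"; simp)+
  have "dist (c1 (t * dist p q)) (c3 (t * dist p r))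
      \<le> cmod (of_real (t * dist p q / dist p q) * of_real (dist p q)
        - of_real (t * dist p r / dist p r) * E)"
    by (rule CAT0_comparison[OF cat g1 g3]) (use t E in \<open>auto simp: mult_left_le_one_le\<close>)
  also have "\<dots> = cmod (of_real t * of_real (dist p q) - of_real t * E)"
    unfolding scale ..
  also have "\<dots> = t * dist q r"
    using E(2) t by (simp add: right_diff_distrib[symmetric] norm_mult)
  finally show ?thesis .
qed

lemma CAT0_dist_same_param_sq_le:
  fixes p q r :: "'a::metric_space"
  assumes cat: "CAT0 TYPE('a)"
    and g1: "geodesic_segment c1 p q" and g3: "geodesic_segment c3 p r"
    and pq: "dist p q > 0" and pr: "dist p r > 0"
    and s: "0 \<le> s" "s \<le> dist p q" "s \<le> dist p r"
  shows "(dist (c1 s) (c3 s))\<^sup>2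
    \<le> s\<^sup>2 * ((dist q r)\<^sup>2 - (dist p q - dist p r)\<^sup>2) / (dist p q * dist p r)"
proof -
  obtain E where E: "cmod E = dist p r" "cmod (of_real (dist p q) - E) = dist q r"
    using comparison_triangle_exists .
  define a where "a = dist p q"
  define b where "b = dist p r"
  have Eb: "(Re E)\<^sup>2 + (Im E)\<^sup>2 = b\<^sup>2"
    using E(1) by (simp add: b_def flip: cmod_power2)
  have Ec: "(a - Re E)\<^sup>2 + (Im E)\<^sup>2 = (dist q r)\<^sup>2"
    using E(2) cmod_power2[of "of_real a - E"] by (simp add: a_def)
  have "dist (c1 s) (c3 s) \<le> cmod (of_real (s / a) * of_real a - of_real (s / b) * E)"
    unfolding a_def b_def by (rule CAT0_comparison[OF cat g1 g3]) (use s E in auto)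
  then have "(dist (c1 s) (c3 s))\<^sup>2 \<le> (cmod (of_real (s / a) * of_real a - of_real (s / b) * E))\<^sup>2"
    by (simp add: power_mono)
  also have "\<dots> = (s - s / b * Re E)\<^sup>2 + (s / b * Im E)\<^sup>2"
    using pq by (simp add: cmod_power2 a_def)
  also have "\<dots> = s\<^sup>2 - 2 * s\<^sup>2 * Re E / b + (s / b)\<^sup>2 * ((Re E)\<^sup>2 + (Im E)\<^sup>2)"
    using pr by (simp add: b_def power2_eq_square field_simps)
  also have "\<dots> = s\<^sup>2 * (2 - 2 * Re E / b)"
    using pr unfolding Eb by (simp add: b_def power2_eq_square field_simps)
  also have "\<dots> = s\<^sup>2 * (2 * a * (b - Re E)) / (a * b)"
    using pq pr by (simp add: a_def b_def field_simps)
  also have "\<dots> = s\<^sup>2 * ((dist q r)\<^sup>2 - (a - b)\<^sup>2) / (a * b)"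
  proof -
    have "(dist q r)\<^sup>2 = a\<^sup>2 - 2 * a * Re E + b\<^sup>2"
      using Eb Ec unfolding power2_diff by linarith
    then have "(dist q r)\<^sup>2 - (a - b)\<^sup>2 = 2 * a * (b - Re E)"
      by (simp add: power2_diff algebra_simps)
    then show ?thesis by (simp only:)
  qed
  finally show ?thesis by (simp add: a_def b_def)
qed

lemma CAT0_dist_geodesics_convex:
  fixes p q p' q' :: "'a::metric_space"
  assumes cat: "CAT0 TYPE('a)"
    and g: "geodesic_segment c p q" and g': "geodesic_segment c' p' q'"
    and L: "dist p' q' = dist p q" and s: "0 \<le> s" "s \<le> dist p q"
  shows "dist (c s) (c' s) \<le> (1 - s / dist p q) * dist p p' + (s / dist p q) * dist q q'"
proof (cases "dist p q = 0")
  case True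
  then show ?thesis using g g' L s unfolding geodesic_segment_def by auto
next
  case False
  define l where "l = dist p q"
  define t where "t = s / l"
  have t: "0 \<le> t" "t \<le> 1" and st: "s = t * l"
    using s False by (auto simp: t_def l_def)
  obtain c'' where g'': "geodesic_segment c'' p q'" using CAT0_geodesic_exists[OF cat] .
  define l'' where "l'' = dist p q'"
  have d1: "dist (c (t * l)) (c'' (t * l'')) \<le> t * dist q q'"
    using CAT0_dist_scaled_le[OF cat g g'' t] by (simp add: l_def l''_def)
  have r'': "geodesic_segment (\<lambda>u. c'' (l'' - u)) q' p"
    using geodesic_segment_reverse[OF g''] by (simp add: l''_def)
  have r': "geodesic_segment (\<lambda>u. c' (l - u)) q' p'"
    using geodesic_segment_reverse[OF g'] L by (simp add: l_def)
  have "dist (c'' (l'' - (1 - t) * l'')) (c' (l - (1 - t) * l)) \<le> (1 - t) * dist p p'"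
    using CAT0_dist_scaled_le[OF cat r'' r', of "1 - t"] t
    by (simp add: l''_def dist_commute L l_def)
  moreover have "l'' - (1 - t) * l'' = t * l''" "l - (1 - t) * l = t * l"
    by (auto simp: algebra_simps)
  ultimately have d2: "dist (c'' (t * l'')) (c' (t * l)) \<le> (1 - t) * dist p p'" by simp
  have "dist (c s) (c' s) \<le> dist (c (t * l)) (c'' (t * l'')) + dist (c'' (t * l'')) (c' (t * l))"
    using st dist_triangle by metis
  also have "\<dots> \<le> t * dist q q' + (1 - t) * dist p p'" using d1 d2 by simp
  finally show ?thesis by (simp add: t_def l_def algebra_simps)
qed

lemma CAT0_displacement_on_segment_le:
  assumes cat: "CAT0 TYPE('a::metric_space)"
    and iso: "\<And>x y. dist (h x) (h y) = dist x y"
    and g: "geodesic_segment c x (y::'a)" and s: "s \<in> {0..dist x y}"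
  shows "dist (c s) (h (c s)) \<le> max (dist x (h x)) (dist y (h y))"
proof -
  have "dist (c s) ((h \<circ> c) s)
      \<le> (1 - s / dist x y) * dist x (h x) + (s / dist x y) * dist y (h y)"
    using CAT0_dist_geodesics_convex[OF cat g geodesic_segment_isometry[OF iso g]] iso s by simp
  also have "\<dots> \<le> (1 - s / dist x y) * max (dist x (h x)) (dist y (h y))
      + (s / dist x y) * max (dist x (h x)) (dist y (h y))"
    using s by (intro add_mono mult_left_mono) (auto simp: divide_le_eq_1)
  also have "\<dots> = max (dist x (h x)) (dist y (h y))"
    by (simp add: algebra_simps)
  finally show ?thesis by simp
qed

section \<open>Geodesic rays and the visual boundary\<close>

lemma geodesic_ray_dist_base:
  assumes "geodesic_ray c" "0 \<le> t"
  shows "dist (c 0) (c t) = t"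
  using assms unfolding geodesic_ray_def by auto

lemma geodesic_ray_segment:
  assumes "geodesic_ray c" "0 \<le> T"
  shows "geodesic_segment c (c 0) (c T)"
  using assms unfolding geodesic_segment_def geodesic_ray_dist_base[OF assms]
  unfolding geodesic_ray_def by auto

lemma geodesic_ray_dist_from_point:
  assumes "geodesic_ray c" "0 \<le> t"
  shows "\<bar>dist x (c t) - t\<bar> \<le> dist x (c 0)"
  using dist_triangle[of x "c t" "c 0"] dist_triangle[of "c 0" "c t" x]
    geodesic_ray_dist_base[OF assms]
  by (simp add: dist_commute abs_le_iff)

lemma asymptotic_refl: "asymptotic c c"
  unfolding asymptotic_def by (intro exI[of _ 0]) auto

lemma asymptotic_sym: "asymptotic a b \<Longrightarrow> asymptotic b a"
  unfolding asymptotic_def by (simp add: dist_commute)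

lemma asymptotic_trans:
  assumes "asymptotic a b" "asymptotic b c"
  shows "asymptotic a c"
proof -
  obtain B1 B2 where "\<forall>t\<ge>0. dist (a t) (b t) \<le> B1" "\<forall>t\<ge>0. dist (b t) (c t) \<le> B2"
    using assms unfolding asymptotic_def by blast
  then have "\<forall>t\<ge>0. dist (a t) (c t) \<le> B1 + B2"
    by (smt (verit, best) dist_triangle)
  then show ?thesis unfolding asymptotic_def by blast
qed

lemma asymptotic_isometry:
  assumes "\<And>x y. dist (h x) (h y) = dist x y" "asymptotic a b"
  shows "asymptotic (h \<circ> a) (h \<circ> b)"
  using assms unfolding asymptotic_def by simp

lemma ray_class_eq:
  assumes "asymptotic a b"
  shows "ray_class a = ray_class b"
  unfolding ray_class_def using assms asymptotic_sym asymptotic_trans by blast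

lemma visual_boundary_memD:
  assumes "\<alpha> \<in> visual_boundary TYPE('a::metric_space)" "c \<in> \<alpha>"
  shows "\<alpha> = ray_class c" "geodesic_ray c"
proof -
  obtain c' where c': "geodesic_ray c'" "\<alpha> = ray_class c'"
    using assms(1) unfolding visual_boundary_def by blast
  then show "geodesic_ray c" using assms(2) unfolding ray_class_def by blast
  have "asymptotic c' c" using c' assms(2) unfolding ray_class_def by blast
  then show "\<alpha> = ray_class c" using c'(2) by (simp add: ray_class_eq)
qed

lemma boundary_map_eq_ray_class:
  assumes iso: "\<And>x y. dist (h x) (h y) = dist x y"
    and \<alpha>: "\<alpha> \<in> visual_boundary TYPE('a::metric_space)" and c: "c \<in> \<alpha>"
  shows "boundary_map h \<alpha> = ray_class (h \<circ> c)"
proof -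
  have "(SOME c. c \<in> \<alpha>) \<in> \<alpha>" using someI[of "\<lambda>c. c \<in> \<alpha>", OF c] .
  then have "asymptotic (SOME c. c \<in> \<alpha>) c"
    using visual_boundary_memD[OF \<alpha>] c unfolding ray_class_def by blast
  then show ?thesis
    unfolding boundary_map_def by (intro ray_class_eq asymptotic_isometry[OF iso])
qed

lemma boundary_fixed_points_iff_bounded_displacement:
  assumes iso: "\<And>x y. dist (h x) (h y) = dist x y"
    and \<alpha>: "\<alpha> \<in> visual_boundary TYPE('a::metric_space)" and c: "c \<in> \<alpha>"
  shows "\<alpha> \<in> boundary_fixed_points h \<longleftrightarrow> (\<exists>B. \<forall>t\<ge>0. dist (c t) (h (c t)) \<le> B)"
proof -
  have "\<alpha> \<in> boundary_fixed_points h \<longleftrightarrow> ray_class (h \<circ> c) = ray_class c"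
    using \<alpha> visual_boundary_memD(1)[OF \<alpha> c] boundary_map_eq_ray_class[OF iso \<alpha> c]
    unfolding boundary_fixed_points_def by auto
  also have "\<dots> \<longleftrightarrow> asymptotic c (h \<circ> c)"
  proof
    assume "ray_class (h \<circ> c) = ray_class c"
    moreover have "c \<in> ray_class c"
      using visual_boundary_memD(2)[OF \<alpha> c] asymptotic_refl unfolding ray_class_def by blast
    ultimately show "asymptotic c (h \<circ> c)"
      unfolding ray_class_def by (blast intro: asymptotic_sym)
  qed (simp add: ray_class_eq)
  finally show ?thesis unfolding asymptotic_def by simp
qed

section \<open>Rays from a base point\<close>

text \<open>By the law of cosines, \<open>(c\<^sup>2 - (a - b)\<^sup>2) / (a b) = 2 - 2 cos \<gamma>\<close> for the Euclidean triangle
  with sides \<open>a, b, c\<close> and angle \<open>\<gamma>\<close> opposite \<open>c\<close>.\<close>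
lemma triangle_defect_ratio_le:
  fixes a b c e M :: real
  assumes "0 < M" "M \<le> a" "M \<le> b" "\<bar>a - b\<bar> \<le> c" "c \<le> a + b" "c \<le> \<bar>a - b\<bar> + e"
  shows "(c\<^sup>2 - (a - b)\<^sup>2) / (a * b) \<le> 2 * e / M"
proof -
  define m where "m = max a b"
  have m: "m > 0" using assms by (simp add: m_def)
  have "c\<^sup>2 - (a - b)\<^sup>2 = (c - \<bar>a - b\<bar>) * (c + \<bar>a - b\<bar>)"
    by (simp add: power2_eq_square algebra_simps)
  also have "\<dots> \<le> e * (2 * m)"
    using assms by (intro mult_mono) (auto simp: m_def abs_if max_def)
  finally have num: "c\<^sup>2 - (a - b)\<^sup>2 \<le> e * (2 * m)" .
  have den: "M * m \<le> a * b"
    using assms unfolding m_def by (auto simp: max_def intro: mult_mono mult_mono')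
  have "(c\<^sup>2 - (a - b)\<^sup>2) / (a * b) \<le> e * (2 * m) / (a * b)"
    using num assms by (simp add: divide_right_mono)
  also have "\<dots> \<le> e * (2 * m) / (M * m)"
    using den assms m by (intro divide_left_mono) auto
  also have "\<dots> = 2 * e / M" using m by simp
  finally show ?thesis .
qed

text \<open>The comparison angle at \<open>x0\<close> between the geodesics to \<open>c T\<^sub>1\<close> and \<open>c T\<^sub>2\<close> is
  \<open>O(1 / min T\<^sub>1 T\<^sub>2)\<close>.\<close>
lemma CAT0_geodesics_to_ray_dist_sq_le:
  fixes x0 :: "'a::metric_space"
  assumes cat: "CAT0 TYPE('a)" and ray: "geodesic_ray c"
    and \<sigma>\<^sub>1: "geodesic_segment \<sigma>\<^sub>1 x0 (c T\<^sub>1)" and \<sigma>\<^sub>2: "geodesic_segment \<sigma>\<^sub>2 x0 (c T\<^sub>2)"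
    and T: "0 \<le> T\<^sub>1" "0 \<le> T\<^sub>2" and s: "0 \<le> s" "s \<le> M"
    and M: "0 < M" "M \<le> dist x0 (c T\<^sub>1)" "M \<le> dist x0 (c T\<^sub>2)"
  shows "(dist (\<sigma>\<^sub>1 s) (\<sigma>\<^sub>2 s))\<^sup>2 \<le> 4 * s\<^sup>2 * dist x0 (c 0) / M"
proof -
  define d0 where "d0 = dist x0 (c 0)"
  define L\<^sub>1 where "L\<^sub>1 = dist x0 (c T\<^sub>1)"
  define L\<^sub>2 where "L\<^sub>2 = dist x0 (c T\<^sub>2)"
  define e where "e = dist (c T\<^sub>1) (c T\<^sub>2)"
  have "\<bar>L\<^sub>1 - T\<^sub>1\<bar> \<le> d0" "\<bar>L\<^sub>2 - T\<^sub>2\<bar> \<le> d0" "e = \<bar>T\<^sub>1 - T\<^sub>2\<bar>"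
    using geodesic_ray_dist_from_point[OF ray] ray T unfolding geodesic_ray_def
    by (auto simp: L\<^sub>1_def L\<^sub>2_def d0_def e_def)
  then have "e \<le> \<bar>L\<^sub>1 - L\<^sub>2\<bar> + 2 * d0" by linarith
  moreover have "\<bar>L\<^sub>1 - L\<^sub>2\<bar> \<le> e" "e \<le> L\<^sub>1 + L\<^sub>2"
    using dist_triangle[of x0 "c T\<^sub>1" "c T\<^sub>2"] dist_triangle[of x0 "c T\<^sub>2" "c T\<^sub>1"]
      dist_triangle[of "c T\<^sub>1" "c T\<^sub>2" x0]
    unfolding L\<^sub>1_def L\<^sub>2_def e_def abs_le_iff by (simp_all add: dist_commute)
  ultimately have "(e\<^sup>2 - (L\<^sub>1 - L\<^sub>2)\<^sup>2) / (L\<^sub>1 * L\<^sub>2) \<le> 2 * (2 * d0) / M"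
    using M by (intro triangle_defect_ratio_le) (auto simp: L\<^sub>1_def L\<^sub>2_def)
  then have bound: "s\<^sup>2 * ((e\<^sup>2 - (L\<^sub>1 - L\<^sub>2)\<^sup>2) / (L\<^sub>1 * L\<^sub>2)) \<le> s\<^sup>2 * (2 * (2 * d0) / M)"
    by (rule mult_left_mono) simp
  have "(dist (\<sigma>\<^sub>1 s) (\<sigma>\<^sub>2 s))\<^sup>2 \<le> s\<^sup>2 * (e\<^sup>2 - (L\<^sub>1 - L\<^sub>2)\<^sup>2) / (L\<^sub>1 * L\<^sub>2)"
    unfolding L\<^sub>1_def L\<^sub>2_def e_def
    by (rule CAT0_dist_same_param_sq_le[OF cat \<sigma>\<^sub>1 \<sigma>\<^sub>2]) (use s M in auto)
  also have "\<dots> \<le> 4 * s\<^sup>2 * d0 / M" using bound by (simp add: ac_simps)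
  finally show ?thesis by (simp add: d0_def)
qed

lemma CAT0_geodesics_to_ray_Cauchy:
  fixes x0 :: "'a::metric_space"
  assumes cat: "CAT0 TYPE('a)" and ray: "geodesic_ray c"
    and \<sigma>: "\<And>n. geodesic_segment (\<sigma> n) x0 (c (real n))" and s: "0 \<le> s"
  shows "Cauchy (\<lambda>n. \<sigma> n s)"
  unfolding Cauchy_def
proof (intro allI impI)
  fix \<epsilon> :: real assume \<epsilon>: "\<epsilon> > 0"
  define d0 where "d0 = dist x0 (c 0)"
  obtain N :: nat where N: "real N \<ge> d0 + s + 1 + 4 * s\<^sup>2 * d0 / \<epsilon>\<^sup>2"
    using real_arch_simple by blast
  define M where "M = real N - d0"
  have "4 * s\<^sup>2 * d0 / \<epsilon>\<^sup>2 \<ge> 0" by (simp add: d0_def)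
  then have M: "M \<ge> 1" "M \<ge> s" "4 * s\<^sup>2 * d0 / \<epsilon>\<^sup>2 < M"
    using N s unfolding M_def by linarith+
  then have Me: "4 * s\<^sup>2 * d0 / M < \<epsilon>\<^sup>2" using \<epsilon> by (simp add: field_simps)
  have "M \<le> dist x0 (c (real n))" if "N \<le> n" for n
    using geodesic_ray_dist_from_point[OF ray, of "real n" x0] that
    unfolding M_def d0_def by auto
  then have "(dist (\<sigma> m s) (\<sigma> n s))\<^sup>2 < \<epsilon>\<^sup>2" if "N \<le> m" "N \<le> n" for m n
    using CAT0_geodesics_to_ray_dist_sq_le[OF cat ray \<sigma>[of m] \<sigma>[of n]] s M Me that
    unfolding d0_def by fastforce
  then show "\<exists>N. \<forall>m\<ge>N. \<forall>n\<ge>N. dist (\<sigma> m s) (\<sigma> n s) < \<epsilon>"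
    using \<epsilon> by (meson power_less_imp_less_base less_le)
qed

lemma CAT0_geodesic_to_ray_near:
  fixes x0 :: "'a::metric_space"
  assumes cat: "CAT0 TYPE('a)" and ray: "geodesic_ray c"
    and \<sigma>: "geodesic_segment \<sigma> x0 (c T)" and t: "0 \<le> t" and T: "t + dist x0 (c 0) < T"
  shows "dist (c t) (\<sigma> t) \<le> 2 * dist x0 (c 0)"
proof -
  define d0 where "d0 = dist x0 (c 0)"
  define L where "L = dist x0 (c T)"
  have d0: "0 \<le> d0" by (simp add: d0_def)
  have T': "t + d0 < T" using T by (simp add: d0_def)
  then have T0: "0 < T" using t d0 by linarith
  have LT: "\<bar>L - T\<bar> \<le> d0"
    using geodesic_ray_dist_from_point[OF ray, of T] T0 by (simp add: L_def d0_def)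
  define \<tau> where "\<tau> = 1 - t / T"
  have \<tau>: "0 \<le> \<tau>" "\<tau> \<le> 1" using T0 T' t d0 by (auto simp: \<tau>_def field_simps)
  have "dist x0 (c T) - \<tau> * dist (c T) x0 = t * L / T"
    "dist (c 0) (c T) - \<tau> * dist (c T) (c 0) = t"
    using T0 geodesic_ray_dist_base[OF ray, of T]
    by (simp_all add: L_def dist_commute \<tau>_def field_simps)
  with CAT0_dist_scaled_le[OF cat geodesic_segment_reverse[OF \<sigma>]
      geodesic_segment_reverse[OF geodesic_ray_segment[OF ray less_imp_le[OF T0]]] \<tau>]
  have "dist (\<sigma> (t * L / T)) (c t) \<le> \<tau> * d0" by (simp only: d0_def)
  also have "\<dots> \<le> d0" using \<tau> d0 by (simp add: mult_left_le_one_le)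
  finally have A: "dist (\<sigma> (t * L / T)) (c t) \<le> d0" .
  have tL: "t \<le> L" "t \<le> T" "0 \<le> L" using LT T' d0 by (auto simp: L_def)
  then have "t * L / T \<in> {0..L}" "t \<in> {0..L}"
    using T0 t tL mult_left_mono[OF tL(2) tL(3)] by (auto simp: field_simps)
  then have "dist (\<sigma> t) (\<sigma> (t * L / T)) = \<bar>t - t * L / T\<bar>"
    using geodesic_segment_dist[OF \<sigma>] by (simp add: L_def)
  also have "\<dots> = t / T * \<bar>T - L\<bar>"
  proof -
    have "t - t * L / T = t / T * (T - L)" using T0 by (simp add: field_simps)
    then show ?thesis using T0 t by (simp add: abs_mult)
  qed
  also have "\<dots> \<le> 1 * d0"
    using LT T0 t tL by (intro mult_mono) (auto simp: abs_minus_commute)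
  finally show ?thesis
    using A dist_triangle[of "c t" "\<sigma> t" "\<sigma> (t * L / T)"] by (simp add: dist_commute d0_def)
qed

lemma geodesic_ray_pointwise_limit:
  assumes \<sigma>: "\<And>n. geodesic_segment (\<sigma> n) x0 (p n)"
    and far: "\<And>T. eventually (\<lambda>n. T \<le> dist x0 (p n)) sequentially"
    and lim: "\<And>s. 0 \<le> s \<Longrightarrow> (\<lambda>n. \<sigma> n s) \<longlonglongrightarrow> c s"
  shows "geodesic_ray c" "c 0 = x0"
proof -
  show "c 0 = x0"
    using lim[of 0] \<sigma> unfolding geodesic_segment_def by (simp add: LIMSEQ_unique)
  show "geodesic_ray c"
    unfolding geodesic_ray_def
  proof (intro allI impI)
    fix s t :: real assume st: "0 \<le> s" "0 \<le> t"
    have "eventually (\<lambda>n. dist (\<sigma> n s) (\<sigma> n t) = \<bar>s - t\<bar>) sequentially"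
      using far[of "s + t"] by eventually_elim (use geodesic_segment_dist[OF \<sigma>] st in auto)
    then have "(\<lambda>n. dist (\<sigma> n s) (\<sigma> n t)) \<longlonglongrightarrow> \<bar>s - t\<bar>"
      by (rule tendsto_eventually)
    moreover have "(\<lambda>n. dist (\<sigma> n s) (\<sigma> n t)) \<longlonglongrightarrow> dist (c s) (c t)"
      using lim st by (intro tendsto_dist)
    ultimately show "dist (c s) (c t) = \<bar>s - t\<bar>" using LIMSEQ_unique by blast
  qed
qed

lemma CAT0_complete_ray_from_point:
  fixes x0 :: "'a::metric_space"
  assumes cat: "CAT0 TYPE('a)" and complete: "complete (UNIV :: 'a set)"
    and ray: "geodesic_ray c'"
  obtains c where "geodesic_ray c" "c 0 = x0" "asymptotic c' c"
proof -
  define d0 where "d0 = dist x0 (c' 0)"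
  define \<sigma> where "\<sigma> n = (SOME \<gamma>. geodesic_segment \<gamma> x0 (c' (real n)))" for n :: nat
  have \<sigma>: "geodesic_segment (\<sigma> n) x0 (c' (real n))" for n
    unfolding \<sigma>_def using CAT0_geodesic_exists[OF cat] by (metis someI_ex)
  define c where "c s = lim (\<lambda>n. \<sigma> n s)" for s
  have "convergent (\<lambda>n. \<sigma> n s)" if "0 \<le> s" for s
    using complete CAT0_geodesics_to_ray_Cauchy[OF cat ray \<sigma> that]
    unfolding complete_def convergent_def by blast
  then have lim: "(\<lambda>n. \<sigma> n s) \<longlonglongrightarrow> c s" if "0 \<le> s" for s
    using that unfolding c_def by (simp add: convergent_LIMSEQ_iff)
  have eventually_far: "eventually (\<lambda>n. T < real n) sequentially" for T
    by (rule eventually_sequentiallyI[of "nat \<lceil>T + 1\<rceil>"]) linarith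
  have "eventually (\<lambda>n. T \<le> dist x0 (c' (real n))) sequentially" for T
    using eventually_far[of "T + d0"]
  proof eventually_elim
    case (elim n)
    then show ?case
      using geodesic_ray_dist_from_point[OF ray, of "real n" x0] unfolding d0_def abs_le_iff by linarith
  qed
  then have "geodesic_ray c" "c 0 = x0"
    using geodesic_ray_pointwise_limit[OF \<sigma> _ lim] by blast+
  moreover have "asymptotic c' c"
    unfolding asymptotic_def
  proof (intro exI[of _ "2 * d0"] allI impI)
    fix t :: real assume t: "0 \<le> t"
    have "eventually (\<lambda>n. dist (c' t) (\<sigma> n t) \<le> 2 * d0) sequentially"
      using eventually_far[of "t + d0"]
      by eventually_elim (use CAT0_geodesic_to_ray_near[OF cat ray \<sigma> t] in \<open>simp add: d0_def\<close>)
    then show "dist (c' t) (c t) \<le> 2 * d0"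
      using lim[OF t] by (intro tendsto_upperbound[OF tendsto_dist[OF tendsto_const]]) auto
  qed
  ultimately show ?thesis using that by blast
qed

lemma CAT0_complete_boundary_ray_from_point:
  fixes x0 :: "'a::metric_space"
  assumes cat: "CAT0 TYPE('a)" and complete: "complete (UNIV :: 'a set)"
    and \<alpha>: "\<alpha> \<in> visual_boundary TYPE('a)"
  obtains c where "c \<in> \<alpha>" "c 0 = x0"
proof -
  obtain c' where c': "geodesic_ray c'" "\<alpha> = ray_class c'"
    using \<alpha> unfolding visual_boundary_def by blast
  obtain c where "geodesic_ray c" "c 0 = x0" "asymptotic c' c"
    using CAT0_complete_ray_from_point[OF cat complete c'(1)] .
  then show ?thesis using that c'(2) unfolding ray_class_def by blast
qed

text \<open>The displacement \<open>t \<mapsto> d(c t, h (c t))\<close> is convex; a convex function on \<open>[0, \<infinity>)\<close>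
  that is bounded above is nonincreasing.\<close>
lemma CAT0_bounded_displacement_along_ray_le:
  fixes h :: "'a::metric_space \<Rightarrow> 'a"
  assumes cat: "CAT0 TYPE('a)" and ray: "geodesic_ray c"
    and iso: "\<And>x y. dist (h x) (h y) = dist x y"
    and bounded: "\<forall>t\<ge>0. dist (c t) (h (c t)) \<le> B" and t: "0 \<le> t"
  shows "dist (c t) (h (c t)) \<le> dist (c 0) (h (c 0))"
proof (rule ccontr)
  define D where "D = dist (c 0) (h (c 0))"
  define \<delta> where "\<delta> = dist (c t) (h (c t)) - D"
  assume "\<not> ?thesis"
  then have \<delta>: "\<delta> > 0" by (simp add: \<delta>_def D_def)
  define T where "T = t + 1 + t * \<bar>B - D\<bar> / \<delta>"
  have "t * \<bar>B - D\<bar> / \<delta> \<ge> 0" using \<delta> t by simp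
  then have T: "T > 0" "T \<ge> t" "t * \<bar>B - D\<bar> / \<delta> < T"
    using t unfolding T_def by linarith+
  then have Tq: "t * \<bar>B - D\<bar> < \<delta> * T" using \<delta> by (simp add: field_simps)
  have seg: "geodesic_segment c (c 0) (c T)" using geodesic_ray_segment[OF ray] T by simp
  have dT: "dist (c 0) (c T) = T" using geodesic_ray_dist_base[OF ray] T by simp
  have "dist (c t) ((h \<circ> c) t) \<le> (1 - t / T) * D + (t / T) * dist (c T) (h (c T))"
    using CAT0_dist_geodesics_convex[OF cat seg geodesic_segment_isometry[OF iso seg]] iso dT T t
    by (simp add: D_def)
  also have "\<dots> \<le> (1 - t / T) * D + (t / T) * B"
    using bounded T t by (intro add_left_mono mult_left_mono) auto
  also have "\<dots> = D + t * (B - D) / T" using T by (simp add: field_simps)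
  also have "\<dots> \<le> D + t * \<bar>B - D\<bar> / T"
    using t T by (simp add: divide_right_mono mult_left_mono)
  also have "\<dots> < D + \<delta>" using T Tq by (simp add: field_simps)
  finally show False by (simp add: \<delta>_def)
qed

lemma CAT0_in_cone_closure_if_near_ray:
  fixes x0 :: "'a::metric_space"
  assumes cat: "CAT0 TYPE('a)" and c: "c \<in> \<alpha>" "geodesic_ray c" "c 0 = x0"
    and near: "\<forall>t\<ge>0. \<exists>y\<in>S. dist (c t) y \<le> R"
  shows "in_cone_closure x0 S \<alpha>"
  unfolding in_cone_closure_def
proof (intro bexI[OF _ c(1)] conjI allI impI)
  fix r \<epsilon> :: real assume r: "r > 0" and \<epsilon>: "\<epsilon> > 0"
  have R: "R \<ge> 0" using near by (meson order_trans zero_le_dist order_refl)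
  define n where "n = r + 2 * R + 2 * r * R / \<epsilon> + 1"
  have "2 * r * R / \<epsilon> \<ge> 0" using r R \<epsilon> by simp
  then have n: "n > r + 2 * R" "n > 0" "2 * r * R / \<epsilon> < n"
    using r R unfolding n_def by linarith+
  then have n2: "2 * r * R < \<epsilon> * n" using \<epsilon> by (simp add: field_simps)
  obtain y where y: "y \<in> S" "dist (c n) y \<le> R" using near[rule_format, of n] n by auto
  have dn: "dist x0 (c n) = n" using geodesic_ray_dist_base[OF c(2)] c(3) n by simp
  define m where "m = dist x0 y"
  have m: "\<bar>m - n\<bar> \<le> R"
    using dist_triangle[of x0 y "c n"] dist_triangle[of x0 "c n" y] y dn
    unfolding m_def by (simp add: dist_commute abs_le_iff)
  obtain cy where cy: "geodesic_segment cy x0 y" using CAT0_geodesic_exists[OF cat] .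
  have seg: "geodesic_segment c x0 (c n)" using geodesic_ray_segment[OF c(2)] n c(3) by simp
  define t where "t = r / n"
  have t: "0 \<le> t" "t \<le> 1" "t * n = r" using n r R by (auto simp: t_def)
  have "dist (c (t * n)) (cy (t * m)) \<le> t * dist (c n) y"
    using CAT0_dist_scaled_le[OF cat seg cy t(1,2)] by (simp add: dn m_def)
  also have "\<dots> \<le> t * R" using y t by (simp add: mult_left_mono)
  finally have A: "dist (c r) (cy (t * m)) \<le> t * R" using t by simp
  have "t * m \<le> m" using t by (simp add: m_def mult_left_le_one_le)
  then have "dist (cy r) (cy (t * m)) = \<bar>r - t * m\<bar>"
    using geodesic_segment_dist[OF cy] t m n r by (simp add: m_def)
  also have "\<dots> = t * \<bar>n - m\<bar>" using t by (metis abs_mult abs_of_nonneg right_diff_distrib)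
  also have "\<dots> \<le> t * R" using m t by (simp add: abs_minus_commute mult_left_mono)
  finally have "dist (cy r) (c r) \<le> 2 * t * R"
    using A dist_triangle[of "cy r" "c r" "cy (t * m)"] by (simp add: dist_commute)
  also have "\<dots> < \<epsilon>" using n n2 by (simp add: t_def field_simps)
  finally show "\<exists>x\<in>S. r < dist x0 x \<and> (\<exists>cx. geodesic_segment cx x0 x \<and> dist (cx r) (c r) < \<epsilon>)"
    using y(1) m n cy unfolding m_def by (intro bexI[OF _ y(1)]) auto
qed (use c in auto)

section \<open>Geometric group actions\<close>

fun products_of_length :: "('g, 'b) monoid_scheme \<Rightarrow> 'g set \<Rightarrow> nat \<Rightarrow> 'g set" where
  "products_of_length G W 0 = {\<one>\<^bsub>G\<^esub>}"
| "products_of_length G W (Suc n) = (\<lambda>(a, b). a \<otimes>\<^bsub>G\<^esub> b) ` (products_of_length G W n \<times> W)"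

lemma finite_products_of_length: "finite W \<Longrightarrow> finite (products_of_length G W n)"
  by (induction n) auto

lemma (in group) chain_mem_products_of_length:
  assumes "w 0 = \<one>" "\<And>j. j \<le> n \<Longrightarrow> w j \<in> carrier G"
    and "\<And>j. j < n \<Longrightarrow> inv (w j) \<otimes> w (Suc j) \<in> W"
  shows "w n \<in> products_of_length G W n"
  using assms(2,3)
proof (induction n)
  case 0
  then show ?case using assms(1) by simp
next
  case (Suc n)
  have "w (Suc n) = w n \<otimes> (inv (w n) \<otimes> w (Suc n))"
    using Suc.prems(1) by (simp add: m_assoc[symmetric])
  then show ?case using Suc by force
qed

lemma (in group) conjugate_eq_imp_mem_centralizer:
  assumes "g \<in> carrier G" "h \<in> carrier G" "h' \<in> carrier G"
    and "inv h \<otimes> g \<otimes> h = inv h' \<otimes> g \<otimes> h'"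
  shows "h \<otimes> inv h' \<in> centralizer_of G g"
proof -
  have "g \<otimes> (h \<otimes> inv h') = h \<otimes> (inv h \<otimes> g \<otimes> h) \<otimes> inv h'"
    using assms(1-3) by (simp add: m_assoc[symmetric])
  also have "\<dots> = h \<otimes> inv h' \<otimes> g"
    using assms by (simp add: m_assoc)
  finally show ?thesis using assms(2,3) unfolding centralizer_of_def by simp
qed

locale geometric_group_action =
  fixes G :: "('g, 'b) monoid_scheme" (structure) and \<phi> :: "'g \<Rightarrow> 'a::metric_space \<Rightarrow> 'a"
  assumes geometric: "geometric_action G \<phi>"
begin

lemma group_action: "group_action G UNIV \<phi>"
  using geometric unfolding geometric_action_def by auto

sublocale group G
  using group_action unfolding group_action_def group_hom_def by auto

lemma dist_act: "v \<in> carrier G \<Longrightarrow> dist (\<phi> v x) (\<phi> v y) = dist x y"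
  using geometric unfolding geometric_action_def by auto

lemma act_mult: "u \<in> carrier G \<Longrightarrow> v \<in> carrier G \<Longrightarrow> \<phi> (u \<otimes> v) x = \<phi> u (\<phi> v x)"
  using group_action.composition_rule[OF group_action] by auto

lemma act_one: "\<phi> \<one> x = x"
  using group_action.id_eq_one[OF group_action] by (metis UNIV_I restrict_apply')

lemma act_inv_act: "u \<in> carrier G \<Longrightarrow> \<phi> (inv u) (\<phi> u x) = x"
  by (metis act_mult act_one inv_closed l_inv)

lemma act_act_inv: "u \<in> carrier G \<Longrightarrow> \<phi> u (\<phi> (inv u) x) = x"
  by (metis act_mult act_one inv_closed r_inv)

lemma cocompact:
  obtains K where "compact K" "\<And>x. \<exists>v\<in>carrier G. \<exists>k\<in>K. x = \<phi> v k"
proof -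
  obtain K where K: "compact K" "(\<Union>v\<in>carrier G. \<phi> v ` K) = UNIV"
    using geometric unfolding geometric_action_def by blast
  have "\<exists>v\<in>carrier G. \<exists>k\<in>K. x = \<phi> v k" for x
  proof -
    have "x \<in> (\<Union>v\<in>carrier G. \<phi> v ` K)" by (simp add: K(2))
    then show ?thesis by blast
  qed
  then show ?thesis using that K(1) by blast
qed

lemma dist_act_inv_mult:
  assumes "w \<in> carrier G" "w' \<in> carrier G"
  shows "dist (\<phi> w x) (\<phi> w' y) = dist x (\<phi> (inv w \<otimes> w') y)"
proof -
  have "\<phi> w' y = \<phi> w (\<phi> (inv w \<otimes> w') y)"
    using assms by (simp add: act_mult[symmetric] m_assoc[symmetric])
  then show ?thesis by (simp add: dist_act[OF assms(1)])
qed

lemma continuous_on_act: "v \<in> carrier G \<Longrightarrow> continuous_on S (\<phi> v)"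
  unfolding continuous_on_iff by (simp add: dist_act) blast

lemma Cauchy_act: "v \<in> carrier G \<Longrightarrow> Cauchy y \<Longrightarrow> Cauchy (\<lambda>n. \<phi> v (y n))"
  unfolding Cauchy_def by (simp add: dist_act)

lemma finite_small_displacement_on_compact:
  assumes K: "compact K"
  obtains \<rho> F where "\<rho> > 0" "finite F"
    "\<And>y w. y \<in> K \<Longrightarrow> w \<in> carrier G \<Longrightarrow> dist (\<phi> w y) y < \<rho> \<Longrightarrow> w \<in> F"
proof -
  have "\<forall>x. \<exists>r>0. finite {v \<in> carrier G. \<phi> v ` ball x r \<inter> ball x r \<noteq> {}}"
    using geometric unfolding geometric_action_def by blast
  then obtain r where r: "\<And>x. r x > 0" "\<And>x. finite {v \<in> carrier G. \<phi> v ` ball x (r x) \<inter> ball x (r x) \<noteq> {}}"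
    by (auto dest!: choice)
  obtain T where T: "T \<subseteq> K" "finite T" "K \<subseteq> (\<Union>x\<in>T. ball x (r x / 2))"
    using compactE_image[OF K, of K "\<lambda>x. ball x (r x / 2)"] r(1) by force
  define \<rho> where "\<rho> = Min (insert 1 ((\<lambda>x. r x / 2) ` T))"
  have "\<rho> > 0"
    unfolding \<rho>_def using T(2) r(1) by (subst Min_gr_iff) auto
  moreover have "\<rho> \<le> r x / 2" if "x \<in> T" for x
    unfolding \<rho>_def by (rule Min_le) (use T(2) that in auto)
  ultimately have \<rho>: "\<rho> > 0" "\<And>x. x \<in> T \<Longrightarrow> \<rho> \<le> r x / 2" by auto
  define F where "F = (\<Union>x\<in>T. {v \<in> carrier G. \<phi> v ` ball x (r x) \<inter> ball x (r x) \<noteq> {}})"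
  show ?thesis
  proof
    show "finite F" unfolding F_def using T(2) r(2) by auto
  next
    fix y w assume y: "y \<in> K" and w: "w \<in> carrier G" and d: "dist (\<phi> w y) y < \<rho>"
    obtain x where x: "x \<in> T" "dist x y < r x / 2" using T(3) y by auto
    have "dist x (\<phi> w y) < r x" "dist x y < r x"
      using dist_triangle[of x "\<phi> w y" y] x d \<rho>(2)[OF x(1)] r(1)[of x]
      by (simp_all add: dist_commute)
    then have "\<phi> w y \<in> \<phi> w ` ball x (r x) \<inter> ball x (r x)" by auto
    then show "w \<in> F" unfolding F_def using x w by blast
  qed (use \<rho> in simp)
qed

lemma finite_near_point_on_compact:
  assumes K: "compact K"
  obtains \<rho> where "\<rho> > 0" "\<And>z z'. z' \<in> K \<Longrightarrow> finite {u \<in> carrier G. dist z (\<phi> u z') < \<rho>}"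
proof -
  obtain \<rho> F where \<rho>: "\<rho> > 0" "finite F"
    "\<And>y w. y \<in> K \<Longrightarrow> w \<in> carrier G \<Longrightarrow> dist (\<phi> w y) y < \<rho> \<Longrightarrow> w \<in> F"
    using finite_small_displacement_on_compact[OF K] by blast
  have "finite {u \<in> carrier G. dist z (\<phi> u z') < \<rho> / 2}" if z': "z' \<in> K" for z z'
  proof (cases "{u \<in> carrier G. dist z (\<phi> u z') < \<rho> / 2} = {}")
    case False
    then obtain u0 where u0: "u0 \<in> carrier G" "dist z (\<phi> u0 z') < \<rho> / 2" by blast
    have "{u \<in> carrier G. dist z (\<phi> u z') < \<rho> / 2} \<subseteq> (\<lambda>w. u0 \<otimes> w) ` F"
    proof safe
      fix u assume u: "u \<in> carrier G" "dist z (\<phi> u z') < \<rho> / 2"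
      have "dist (\<phi> u0 z') (\<phi> u z') < \<rho>"
        using u u0 dist_triangle[of "\<phi> u0 z'" "\<phi> u z'" z] by (simp add: dist_commute)
      then have "dist (\<phi> (inv u0 \<otimes> u) z') z' < \<rho>"
        using dist_act_inv_mult[OF u0(1) u(1), of z' z'] by (simp add: dist_commute)
      then have "inv u0 \<otimes> u \<in> F" using \<rho>(3) z' u u0 by simp
      moreover have "u = u0 \<otimes> (inv u0 \<otimes> u)" using u u0 by (simp add: m_assoc[symmetric])
      ultimately show "u \<in> (\<lambda>w. u0 \<otimes> w) ` F" by blast
    qed
    then show ?thesis using \<rho>(2) by (meson finite_imageI finite_subset)
  qed (metis finite.emptyI)
  then show ?thesis using that[of "\<rho> / 2"] \<rho>(1) by simp
qed

lemma finite_near_translates: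
  assumes K: "compact K"
  obtains \<eta> where "\<eta> > 0" "finite {u \<in> carrier G. \<exists>k\<in>K. \<exists>k'\<in>K. dist k (\<phi> u k') < \<eta>}"
proof -
  obtain \<rho> where \<rho>: "\<rho> > 0" "\<And>z z'. z' \<in> K \<Longrightarrow> finite {u \<in> carrier G. dist z (\<phi> u z') < \<rho>}"
    using finite_near_point_on_compact[OF K] by blast
  define \<eta> where "\<eta> = \<rho> / 3"
  have \<eta>: "\<eta> > 0" using \<rho>(1) by (simp add: \<eta>_def)
  obtain Z where Z: "Z \<subseteq> K" "finite Z" "K \<subseteq> (\<Union>x\<in>Z. ball x \<eta>)"
    using compactE_image[OF K, of K "\<lambda>x. ball x \<eta>"] \<eta> by force
  let ?U = "\<Union>z\<in>Z. \<Union>z'\<in>Z. {u \<in> carrier G. dist z (\<phi> u z') < \<rho>}"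
  have "{u \<in> carrier G. \<exists>k\<in>K. \<exists>k'\<in>K. dist k (\<phi> u k') < \<eta>} \<subseteq> ?U"
  proof safe
    fix u k k' assume u: "u \<in> carrier G" "k \<in> K" "k' \<in> K" "dist k (\<phi> u k') < \<eta>"
    obtain z z' where z: "z \<in> Z" "dist z k < \<eta>" "z' \<in> Z" "dist z' k' < \<eta>"
      using Z(3) u(2,3) by (meson UN_E mem_ball subsetD)
    have "dist (\<phi> u k') (\<phi> u z') < \<eta>" using dist_act[OF u(1), of k' z'] z(4) by (simp add: dist_commute)
    then have "dist z (\<phi> u z') < \<rho>"
      using dist_triangle[of z "\<phi> u k'" k] dist_triangle[of z "\<phi> u z'" "\<phi> u k'"] z(2) u(4)
      unfolding \<eta>_def by linarith
    then show "u \<in> ?U" using z u by blast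
  qed
  moreover have "finite ?U" using Z(1,2) \<rho>(2) by (intro finite_UN_I) auto
  ultimately show ?thesis using that \<eta> finite_subset by blast
qed

text \<open>A Cauchy sequence eventually stays \<open>\<eta>\<close>-close to one of its points \<open>h k\<close>; translated back
  by \<open>h\<^sup>-\<^sup>1\<close>, its tail lies in the finite union of the translates \<open>u K\<close> that come \<open>\<eta>\<close>-close to \<open>K\<close>,
  which is compact.\<close>
lemma complete_UNIV_geometric: "complete (UNIV :: 'a set)"
  unfolding complete_def
proof safe
  fix y :: "nat \<Rightarrow> 'a" assume y: "Cauchy y"
  obtain K where K: "compact K" "\<And>x. \<exists>v\<in>carrier G. \<exists>k\<in>K. x = \<phi> v k" using cocompact by blast
  obtain \<eta> where \<eta>: "\<eta> > 0" "finite {u \<in> carrier G. \<exists>k\<in>K. \<exists>k'\<in>K. dist k (\<phi> u k') < \<eta>}"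
    using finite_near_translates[OF K(1)] by blast
  define W where "W = {u \<in> carrier G. \<exists>k\<in>K. \<exists>k'\<in>K. dist k (\<phi> u k') < \<eta>}"
  define S where "S = (\<Union>u\<in>W. \<phi> u ` K)"
  obtain N where N: "\<And>m n. m \<ge> N \<Longrightarrow> n \<ge> N \<Longrightarrow> dist (y m) (y n) < \<eta>"
    using y \<eta>(1) unfolding Cauchy_def by blast
  obtain h k where hk: "h \<in> carrier G" "k \<in> K" "y N = \<phi> h k" using K by blast
  define z where "z = (\<lambda>n. \<phi> (inv h) (y (n + N)))"
  have yz: "y (n + N) = \<phi> h (z n)" for n unfolding z_def act_act_inv[OF hk(1)] ..
  have "compact S"
    using \<eta>(2) K(1) continuous_on_act unfolding S_def W_def
    by (intro compact_UN compact_continuous_image) simp_all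
  then have "complete S" by (rule compact_imp_complete)
  moreover have "z n \<in> S" for n
  proof -
    obtain u k' where uk: "u \<in> carrier G" "k' \<in> K" "z n = \<phi> u k'" using K by blast
    have "dist k (z n) = dist (y N) (y (n + N))"
      unfolding hk(3) yz by (rule dist_act[OF hk(1), symmetric])
    then have "dist k (\<phi> u k') < \<eta>" using N[of N "n + N"] uk by simp
    then have "u \<in> W" unfolding W_def using uk hk by blast
    then show ?thesis unfolding S_def using uk by auto
  qed
  moreover have "Cauchy z"
  proof -
    have "Cauchy (\<lambda>n. y (n + N))"
      using Cauchy_subseq_Cauchy[OF y, of "\<lambda>n. n + N"] by (simp add: strict_mono_def o_def)
    then show ?thesis unfolding z_def by (rule Cauchy_act[OF inv_closed[OF hk(1)]])
  qed
  ultimately obtain l where "z \<longlonglongrightarrow> l"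
    unfolding complete_def by auto
  then have "(\<lambda>n. y (n + N)) \<longlonglongrightarrow> \<phi> h l"
    unfolding yz by (rule continuous_on_tendsto_compose[OF continuous_on_act[OF hk(1), of UNIV]]) auto
  then have "y \<longlonglongrightarrow> \<phi> h l" by (rule LIMSEQ_offset)
  then show "\<exists>l\<in>UNIV. y \<longlonglongrightarrow> l" by blast
qed

text \<open>Subdivide a geodesic from \<open>k\<close> to \<open>v k\<close> into \<open>N\<close> pieces shorter than \<open>\<eta>\<close> and write each
  subdivision point as a translate of a point of \<open>K\<close>: consecutive translating elements differ by an
  element of the finite set \<open>W\<close> of \<open>finite_near_translates\<close>, so \<open>v\<close> is a product of \<open>N\<close> of them.\<close>
lemma finite_bounded_displacement_on_compact:
  assumes geodesic: "\<And>x y :: 'a. \<exists>c. geodesic_segment c x y"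
    and K: "compact K" "\<And>x. \<exists>v\<in>carrier G. \<exists>k\<in>K. x = \<phi> v k"
  shows "finite {v \<in> carrier G. \<exists>k\<in>K. dist k (\<phi> v k) \<le> D}"
proof -
  obtain \<eta> where \<eta>: "\<eta> > 0" "finite {u \<in> carrier G. \<exists>k\<in>K. \<exists>k'\<in>K. dist k (\<phi> u k') < \<eta>}"
    using finite_near_translates[OF K(1)] by blast
  define W where "W = {u \<in> carrier G. \<exists>k\<in>K. \<exists>k'\<in>K. dist k (\<phi> u k') < \<eta>}"
  obtain wf kf where wk: "\<And>x. wf x \<in> carrier G" "\<And>x. kf x \<in> K" "\<And>x. x = \<phi> (wf x) (kf x)"
    using K(2) by metis
  define N :: nat where "N = nat \<lceil>D / \<eta>\<rceil> + 1"
  have N: "N > 0" "D / real N < \<eta>"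
  proof -
    have "D / \<eta> < real N" unfolding N_def by linarith
    then have "D < \<eta> * real N" using \<eta>(1) by (simp add: field_simps)
    then show "D / real N < \<eta>" by (simp add: N_def field_simps)
  qed (simp add: N_def)
  have "{v \<in> carrier G. \<exists>k\<in>K. dist k (\<phi> v k) \<le> D} \<subseteq> products_of_length G W N"
  proof safe
    fix v k assume v: "v \<in> carrier G" and k: "k \<in> K" and D: "dist k (\<phi> v k) \<le> D"
    obtain \<gamma> where \<gamma>: "geodesic_segment \<gamma> k (\<phi> v k)" using geodesic by blast
    define pt where "pt j = \<gamma> (real j * dist k (\<phi> v k) / real N)" for j :: nat
    define w where "w j = (if j = 0 then \<one> else if j = N then v else wf (pt j))" for j
    define kk where "kk j = (if j = 0 \<or> j = N then k else kf (pt j))" for j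
    have "pt 0 = k" "pt N = \<phi> v k"
      using \<gamma> N(1) unfolding pt_def geodesic_segment_def by auto
    then have rep: "pt j = \<phi> (w j) (kk j)" "w j \<in> carrier G" "kk j \<in> K" for j
      using wk v k unfolding w_def kk_def by (auto simp: act_one)
    have "inv (w j) \<otimes> w (Suc j) \<in> W" if j: "j < N" for j
    proof -
      define u where "u = inv (w j) \<otimes> w (Suc j)"
      have u: "u \<in> carrier G" using rep by (simp add: u_def)
      have "dist (kk j) (\<phi> u (kk (Suc j))) = dist (pt j) (pt (Suc j))"
        using rep unfolding u_def by (simp add: dist_act_inv_mult)
      also have "\<dots> = dist k (\<phi> v k) / real N"
        unfolding pt_def by (rule geodesic_segment_subdivision_dist[OF \<gamma> j])
      also have "\<dots> < \<eta>"
        using divide_right_mono[OF D, of "real N"] N by simp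
      finally show ?thesis using rep u unfolding W_def u_def by blast
    qed
    then have "w N \<in> products_of_length G W N"
      using rep by (intro chain_mem_products_of_length) (simp_all add: w_def)
    then show "v \<in> products_of_length G W N" using N(1) by (simp add: w_def)
  qed
  moreover have "finite (products_of_length G W N)"
    using \<eta>(2) by (simp add: W_def finite_products_of_length)
  ultimately show ?thesis by (rule finite_subset)
qed

text \<open>Fix one conjugator \<open>H v\<close> for each of the finitely many conjugates \<open>v = h\<^sup>-\<^sup>1 g h\<close> that move
  a point of \<open>K\<close> by at most \<open>D\<close>; then \<open>h (H v)\<^sup>-\<^sup>1\<close> centralizes \<open>g\<close>.\<close>
lemma bounded_displacement_near_centralizer_orbit:
  assumes geodesic: "\<And>x y :: 'a. \<exists>c. geodesic_segment c x y" and g: "g \<in> carrier G"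
  obtains R where "\<And>x. dist x (\<phi> g x) \<le> D \<Longrightarrow> \<exists>u\<in>centralizer_of G g. dist x (\<phi> u x0) \<le> R"
proof -
  obtain K where K: "compact K" "\<And>x. \<exists>v\<in>carrier G. \<exists>k\<in>K. x = \<phi> v k" using cocompact by blast
  define S where "S = {v \<in> carrier G. \<exists>k\<in>K. dist k (\<phi> v k) \<le> D}"
  have S: "finite S" unfolding S_def by (rule finite_bounded_displacement_on_compact[OF geodesic K])
  obtain M where M: "\<And>k. k \<in> K \<Longrightarrow> dist k x0 \<le> M"
    using compact_imp_bounded[OF K(1)] bounded_any_center by (metis dist_commute)
  define H where "H v = (SOME h. h \<in> carrier G \<and> v = inv h \<otimes> g \<otimes> h)" for v
  define R where "R = M + (\<Sum>v\<in>S. dist x0 (\<phi> (inv (H v)) x0))"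
  show ?thesis
  proof (rule that)
    fix x assume x: "dist x (\<phi> g x) \<le> D"
    obtain h k where hk: "h \<in> carrier G" "k \<in> K" "x = \<phi> h k" using K(2) by blast
    define v where "v = inv h \<otimes> g \<otimes> h"
    have "\<phi> h (\<phi> v k) = \<phi> g x"
      using hk g unfolding v_def by (simp add: act_mult[symmetric] m_assoc[symmetric])
    then have "dist k (\<phi> v k) = dist x (\<phi> g x)" using dist_act[OF hk(1), of k "\<phi> v k"] hk(3) by simp
    then have "dist k (\<phi> v k) \<le> D" using x by simp
    moreover have "v \<in> carrier G" using hk g by (simp add: v_def)
    ultimately have vS: "v \<in> S" unfolding S_def using hk(2) by blast
    have "\<exists>h. h \<in> carrier G \<and> v = inv h \<otimes> g \<otimes> h" using hk v_def by blast
    then have H: "H v \<in> carrier G" "v = inv (H v) \<otimes> g \<otimes> H v"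
      unfolding H_def by (metis (mono_tags, lifting) someI_ex)+
    define u where "u = h \<otimes> inv (H v)"
    have u: "u \<in> centralizer_of G g"
      unfolding u_def using H hk g by (intro conjugate_eq_imp_mem_centralizer) (auto simp: v_def)
    have uc: "u \<in> carrier G" using u unfolding centralizer_of_def by simp
    have "x = \<phi> u (\<phi> (H v) k)"
      using hk H unfolding u_def by (simp add: act_mult act_inv_act)
    then have "dist x (\<phi> u x0) = dist (\<phi> (H v) k) x0" by (simp add: dist_act[OF uc])
    also have "\<dots> = dist k (\<phi> (inv (H v)) x0)"
      using dist_act[OF H(1), of k "\<phi> (inv (H v)) x0"] act_act_inv[OF H(1)] by simp
    also have "\<dots> \<le> dist k x0 + dist x0 (\<phi> (inv (H v)) x0)" by (rule dist_triangle)
    also have "\<dots> \<le> R"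
      unfolding R_def using M[OF hk(2)] S vS by (intro add_mono member_le_sum) auto
    finally show "\<exists>u\<in>centralizer_of G g. dist x (\<phi> u x0) \<le> R" using u by blast
  qed
qed

lemma boundary_fixed_point_mem_centralizer_limit_set:
  assumes cat: "CAT0 TYPE('a)" and g: "g \<in> carrier G"
    and \<alpha>: "\<alpha> \<in> boundary_fixed_points (\<phi> g)"
  shows "\<alpha> \<in> limit_set \<phi> x0 (centralizer_of G g)"
proof -
  have \<alpha>b: "\<alpha> \<in> visual_boundary TYPE('a)" using \<alpha> unfolding boundary_fixed_points_def by simp
  obtain c where c: "c \<in> \<alpha>" "c 0 = x0"
    using CAT0_complete_boundary_ray_from_point[OF cat complete_UNIV_geometric \<alpha>b] .
  have ray: "geodesic_ray c" using visual_boundary_memD(2)[OF \<alpha>b c(1)] .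
  obtain B where B: "\<forall>t\<ge>0. dist (c t) (\<phi> g (c t)) \<le> B"
    using boundary_fixed_points_iff_bounded_displacement[OF dist_act[OF g] \<alpha>b c(1)] \<alpha> by blast
  have displacement: "dist (c t) (\<phi> g (c t)) \<le> dist x0 (\<phi> g x0)" if "0 \<le> t" for t
    using CAT0_bounded_displacement_along_ray_le[OF cat ray dist_act[OF g] B that] c(2) by simp
  have geodesic: "\<exists>c. geodesic_segment c x y" for x y :: 'a
    using CAT0_geodesic_exists[OF cat] by blast
  obtain R where R: "\<And>x. dist x (\<phi> g x) \<le> dist x0 (\<phi> g x0)
      \<Longrightarrow> \<exists>u\<in>centralizer_of G g. dist x (\<phi> u x0) \<le> R"
    using bounded_displacement_near_centralizer_orbit[OF geodesic g, of "dist x0 (\<phi> g x0)" x0] by blast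
  have "\<forall>t\<ge>0. \<exists>y\<in>(\<lambda>v. \<phi> v x0) ` centralizer_of G g. dist (c t) y \<le> R"
  proof (intro allI impI)
    fix t :: real assume "0 \<le> t"
    then obtain u where "u \<in> centralizer_of G g" "dist (c t) (\<phi> u x0) \<le> R"
      using R displacement by blast
    then show "\<exists>y\<in>(\<lambda>v. \<phi> v x0) ` centralizer_of G g. dist (c t) y \<le> R" by blast
  qed
  then show ?thesis
    using CAT0_in_cone_closure_if_near_ray[OF cat c(1) ray c(2)] \<alpha>b by (simp add: limit_set_def)
qed

lemma centralizer_limit_point_mem_boundary_fixed_points:
  assumes cat: "CAT0 TYPE('a)" and g: "g \<in> carrier G"
    and \<alpha>: "\<alpha> \<in> limit_set \<phi> x0 (centralizer_of G g)"
  shows "\<alpha> \<in> boundary_fixed_points (\<phi> g)"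
proof -
  have \<alpha>b: "\<alpha> \<in> visual_boundary TYPE('a)" using \<alpha> unfolding limit_set_def by simp
  obtain c where c: "c \<in> \<alpha>" "c 0 = x0"
    and cone: "\<And>r \<epsilon>. r > 0 \<Longrightarrow> \<epsilon> > 0 \<Longrightarrow> \<exists>x\<in>(\<lambda>v. \<phi> v x0) ` centralizer_of G g. dist x0 x > r \<and>
           (\<exists>cx. geodesic_segment cx x0 x \<and> dist (cx r) (c r) < \<epsilon>)"
    using \<alpha> unfolding limit_set_def in_cone_closure_def by blast
  define D where "D = dist x0 (\<phi> g x0)"
  have "dist (c t) (\<phi> g (c t)) \<le> D + 2" if t: "0 \<le> t" for t
  proof (cases "t = 0")
    case True
    then show ?thesis using c(2) by (simp add: D_def)
  next
    case False
    then obtain u cx where u: "u \<in> centralizer_of G g" "dist x0 (\<phi> u x0) > t"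
      "geodesic_segment cx x0 (\<phi> u x0)" "dist (cx t) (c t) < 1"
      using cone[of t 1] t by auto
    have uc: "u \<in> carrier G" and gu: "g \<otimes> u = u \<otimes> g" using u unfolding centralizer_of_def by auto
    have "\<phi> g (\<phi> u x0) = \<phi> u (\<phi> g x0)"
      using g uc by (simp add: act_mult[symmetric] gu)
    then have "dist (\<phi> u x0) (\<phi> g (\<phi> u x0)) = D" by (simp add: dist_act[OF uc] D_def)
    then have "dist (cx t) (\<phi> g (cx t)) \<le> D"
      using CAT0_displacement_on_segment_le[OF cat dist_act[OF g] u(3), of t] u(2) t
      by (simp add: D_def)
    then show ?thesis
      using u(4) dist_act[OF g, of "cx t" "c t"] dist_commute[of "c t" "cx t"]
        dist_triangle[of "c t" "\<phi> g (c t)" "cx t"] dist_triangle[of "cx t" "\<phi> g (c t)" "\<phi> g (cx t)"]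
      by linarith
  qed
  then show ?thesis
    using boundary_fixed_points_iff_bounded_displacement[OF dist_act[OF g] \<alpha>b c(1)] by blast
qed

end

theorem theorem1:
  fixes G :: "('g, 'b) monoid_scheme" and \<phi> :: "'g \<Rightarrow> 'a::metric_space \<Rightarrow> 'a"
    and g :: 'g and x0 :: 'a
  assumes "CAT0 TYPE('a)"
    and "geometric_action G \<phi>"
    and "g \<in> carrier G"
  shows "boundary_fixed_points (\<phi> g) = limit_set \<phi> x0 (centralizer_of G g)"
proof -
  interpret geometric_group_action G \<phi> by (rule geometric_group_action.intro) fact
  show ?thesis
    using boundary_fixed_point_mem_centralizer_limit_set[OF assms(1,3)]
      centralizer_limit_point_mem_boundary_fixed_points[OF assms(1,3)] by blast
qed

end
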